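(* Let $X$ be a real Banach space and $T:X\rightrightarrows X^*$ maximal monotone. Then $$D\big(\delta_{D(T)}^*\big)\subseteq 0^+\big(\mathrm{cl}_{w*}\mathrm{conv}\,R(T)\big),\qquad D\big(\delta_{R(T)}^*\big)\cap X\subseteq 0^+\big(\mathrm{cl}\,\mathrm{conv}\,D(T)\big),$$ where $\delta_{D(T)}^*:X^*\to\mathbb{R}\cup\{\pm\infty\}$, $\delta_{D(T)}^*(u^* )=\sup_{x\in D(T)}\langle x,u^*\rangle$, and $\delta_{R(T)}^*:X^{**}\to\mathbb{R}\cup\{\pm\infty\}$, $\delta_{R(T)}^*(u^{**})=\sup_{x^*\in R(T)}\langle u^{**},x^*\rangle$.
   Context: $X$ is identified with its canonical image in $X^{**}$. An operator $T:X\rightrightarrows X^*$ is a subset of $X\times X^*$ with domain $D(T)$ (its projection onto $X$) and range $R(T)$ (its projection onto $X^*$); $T$ is monotone if $\langle x-y,x^*-y^*\rangle\geq0$ for all $(x,x^* ),(y,y^* )\in T$, and maximal monotone if it is monotone and not properly contained in another monotone operator. For a function $f$, $D(f)=\{z\;|\;f(z)<\infty\}$. The recession cone of a set $C$ is $0^+C=\{u\;|\;x+\lambda u\in C\ \forall x\in C,\ \forall\lambda\geq0\}$. $\mathrm{cl}$ is norm closure in $X$, $\mathrm{cl}_{w*}$ weak-$*$ closure in $X^*$, $\mathrm{conv}$ convex hull. *)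

theory Defs
  imports "HOL-Analysis.Analysis"
begin

text \<open>Dual space X* is modelled as the type of bounded linear functionals 'a \<Rightarrow>L real;
  the pairing of x with x* is blinfun_apply x* x.  An operator T is a set of pairs.\<close>

definition dom_op :: "('a \<times> 'b) set \<Rightarrow> 'a set" where
  "dom_op T = fst ` T"

definition ran_op :: "('a \<times> 'b) set \<Rightarrow> 'b set" where
  "ran_op T = snd ` T"

definition monotone_op :: "('a::real_normed_vector \<times> ('a \<Rightarrow>\<^sub>L real)) set \<Rightarrow> bool" where
  "monotone_op T \<longleftrightarrow>
     (\<forall>(x, xs)\<in>T. \<forall>(y, ys)\<in>T. blinfun_apply (xs - ys) (x - y) \<ge> 0)"

definition maximal_monotone :: "('a::real_normed_vector \<times> ('a \<Rightarrow>\<^sub>L real)) set \<Rightarrow> bool" where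
  "maximal_monotone T \<longleftrightarrow> monotone_op T \<and> (\<forall>S. monotone_op S \<and> T \<subseteq> S \<longrightarrow> S = T)"

definition eff_dom :: "('a \<Rightarrow> ereal) \<Rightarrow> 'a set" where
  "eff_dom f = {z. f z < \<infinity>}"

definition rec_cone :: "'a::real_vector set \<Rightarrow> 'a set" where
  "rec_cone C = {u. \<forall>x\<in>C. \<forall>l::real. l \<ge> 0 \<longrightarrow> x + l *\<^sub>R u \<in> C}"

text \<open>Weak-* closure in X*: f is in the closure of S iff every basic weak-* neighbourhood
  of f (given by finitely many points of X and a radius) meets S.\<close>
definition wstar_closure :: "('a::real_normed_vector \<Rightarrow>\<^sub>L real) set \<Rightarrow> ('a \<Rightarrow>\<^sub>L real) set" where
  "wstar_closure S = {f. \<forall>F e. finite F \<and> e > 0 \<longrightarrow>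
      (\<exists>g\<in>S. \<forall>x\<in>F. \<bar>blinfun_apply f x - blinfun_apply g x\<bar> < e)}"

definition supp_dom :: "'a set \<Rightarrow> ('a::real_normed_vector \<Rightarrow>\<^sub>L real) \<Rightarrow> ereal" where
  "supp_dom A u = (SUP x\<in>A. ereal (blinfun_apply u x))"

definition supp_ran :: "('a::real_normed_vector \<Rightarrow>\<^sub>L real) set \<Rightarrow>
    (('a \<Rightarrow>\<^sub>L real) \<Rightarrow>\<^sub>L real) \<Rightarrow> ereal" where
  "supp_ran B u = (SUP xs\<in>B. ereal (blinfun_apply u xs))"

definition canon_emb :: "'a::real_normed_vector \<Rightarrow> (('a \<Rightarrow>\<^sub>L real) \<Rightarrow>\<^sub>L real)" where
  "canon_emb x = Blinfun (\<lambda>f. blinfun_apply f x)"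

end

theory Submission
  imports Defs
begin

text \<open>
  If u* is bounded above on D(T) and z \<in> X is such that x* \<mapsto> x*(z) is bounded above on R(T),
  then u*(z) \<le> 0: otherwise, for large s, moving a point (y, y*) of T to (y + s z, y* + s u*)
  keeps it monotonically related to all of T, because the term s^2 u*(z) dominates; by
  maximality the moved point belongs to T, and u*(y + s z) then violates the bound on D(T).

  Now let x lie in the closed convex hull C of R(T) (resp. D(T)) while x + \<lambda>u does not. A
  continuous linear functional f separates x + \<lambda>u from C; for the weak-* closure f is an
  evaluation at some z \<in> X. Then f is bounded above on C, hence on R(T) (resp. D(T)), while
  f(u) > 0, contradicting the first paragraph. The separating functionals come from a
  Hahn-Banach theorem for convex majorants, proved with Zorn's lemma on partial linear
  functionals.
\<close>

definition dominated_linear_graph :: "('v::real_vector \<Rightarrow> real) \<Rightarrow> ('v \<times> real) set \<Rightarrow> bool" where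
  "dominated_linear_graph p G \<longleftrightarrow> subspace G \<and> (\<forall>(x, a)\<in>G. a \<le> p x)"

lemma dominated_linear_graph_single_valued:
  assumes G: "dominated_linear_graph p G" and "(x, a) \<in> G" "(x, b) \<in> G"
  shows "a = b"
proof (rule ccontr)
  assume "a \<noteq> b"
  have sub: "subspace G" and le: "\<And>x a. (x, a) \<in> G \<Longrightarrow> a \<le> p x"
    using G by (auto simp: dominated_linear_graph_def)
  define t where "t = (\<bar>p 0\<bar> + 1) / (a - b)"
  have "t *\<^sub>R ((x, a) - (x, b)) \<in> G"
    using assms(2,3) sub by (intro subspace_mul subspace_diff)
  hence "t * (a - b) \<le> p 0" using le by simp
  moreover have "t * (a - b) = \<bar>p 0\<bar> + 1" using \<open>a \<noteq> b\<close> by (simp add: t_def)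
  ultimately show False by linarith
qed

lemma dominated_linear_graph_extension_bound:
  assumes p: "convex_on UNIV p" and G: "dominated_linear_graph p G"
    and "(m, a) \<in> G" "(m', b) \<in> G" and s: "s > 0" and t: "t > 0"
  shows "(b - p (m' - s *\<^sub>R y)) / s \<le> (p (m + t *\<^sub>R y) - a) / t"
proof -
  have sub: "subspace G" and le: "\<And>x a. (x, a) \<in> G \<Longrightarrow> a \<le> p x"
    using G by (auto simp: dominated_linear_graph_def)
  have "(1 / (s + t)) *\<^sub>R (t *\<^sub>R (m', b) + s *\<^sub>R (m, a)) \<in> G"
    using assms(3,4) sub by (intro subspace_mul subspace_add)
  hence "(t * b + s * a) / (s + t) \<le> p ((1 / (s + t)) *\<^sub>R (t *\<^sub>R m' + s *\<^sub>R m))"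
    using le by simp
  also have "(1 / (s + t)) *\<^sub>R (t *\<^sub>R m' + s *\<^sub>R m)
      = (1 - s / (s + t)) *\<^sub>R (m' - s *\<^sub>R y) + (s / (s + t)) *\<^sub>R (m + t *\<^sub>R y)"
    using s t by (simp add: field_simps scaleR_add_right scaleR_diff_right)
  also have "p \<dots> \<le> (1 - s / (s + t)) * p (m' - s *\<^sub>R y) + (s / (s + t)) * p (m + t *\<^sub>R y)"
    using s t by (intro convex_onD[OF p]) auto
  also have "\<dots> = (t * p (m' - s *\<^sub>R y) + s * p (m + t *\<^sub>R y)) / (s + t)"
  proof -
    have "1 - s / (s + t) = t / (s + t)" using s t by (simp add: field_simps)
    thus ?thesis by (simp add: add_divide_distrib)
  qed
  finally have "t * b + s * a \<le> t * p (m' - s *\<^sub>R y) + s * p (m + t *\<^sub>R y)"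
    using s t by (simp add: divide_le_cancel)
  thus ?thesis using s t by (simp add: field_simps)
qed

lemma dominated_linear_graph_extend:
  assumes p: "convex_on UNIV p" and G: "dominated_linear_graph p G"
  shows "\<exists>c. dominated_linear_graph p (span (insert (y, c) G))"
proof -
  have sub: "subspace G" and le: "\<And>x a. (x, a) \<in> G \<Longrightarrow> a \<le> p x"
    using G by (auto simp: dominated_linear_graph_def)
  have zero: "(0, 0) \<in> G" using subspace_0[OF sub] by (simp add: zero_prod_def)
  define L where "L = {(b - p (m - s *\<^sub>R y)) / s | m b s. (m, b) \<in> G \<and> s > 0}"
  define c where "c = Sup L"
  have L_le: "l \<le> (p (m + t *\<^sub>R y) - a) / t" if "l \<in> L" "(m, a) \<in> G" "t > 0" for l m a t
    using that dominated_linear_graph_extension_bound[OF p G] unfolding L_def by blast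
  have "(0 - p (0 - 1 *\<^sub>R y)) / 1 \<in> L"
    unfolding L_def using zero by (intro CollectI exI[of _ 0] exI[of _ 0] exI[of _ 1]) simp
  hence L_ne: "L \<noteq> {}" by blast
  have "bdd_above L"
    using L_le[OF _ zero, of _ 1] by (intro bdd_aboveI[of _ "p y"]) simp
  hence c_lower: "(b - p (m - s *\<^sub>R y)) / s \<le> c" if "(m, b) \<in> G" "s > 0" for m b s
    unfolding c_def L_def using that by (intro cSup_upper) blast+
  have c_upper: "c \<le> (p (m + t *\<^sub>R y) - a) / t" if "(m, a) \<in> G" "t > 0" for m a t
    unfolding c_def using L_ne L_le[OF _ that] by (intro cSup_least) auto
  have "a \<le> p x" if xa: "(x, a) \<in> span (insert (y, c) G)" for x a
  proof -
    obtain k where "(x, a) - k *\<^sub>R (y, c) \<in> G"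
      using xa span_eq_iff[THEN iffD2, OF sub] by (auto simp: span_insert)
    hence mG: "(x - k *\<^sub>R y, a - k * c) \<in> G" by simp
    consider "k > 0" | "k = 0" | "k < 0" by linarith
    thus ?thesis
    proof cases
      case 1
      with c_upper[OF mG 1] show ?thesis by (simp add: field_simps)
    next
      case 2
      with le[OF mG] show ?thesis by simp
    next
      case 3
      with c_lower[OF mG, of "-k"] show ?thesis by (simp add: field_simps)
    qed
  qed
  thus ?thesis unfolding dominated_linear_graph_def by auto
qed

lemma dominated_linear_graph_Union_chain:
  assumes "C \<noteq> {}" and chain: "subset.chain {G. dominated_linear_graph p G} C"
  shows "dominated_linear_graph p (\<Union>C)"
proof -
  have dom: "\<And>G. G \<in> C \<Longrightarrow> dominated_linear_graph p G"
    and cmp: "\<And>G H. G \<in> C \<Longrightarrow> H \<in> C \<Longrightarrow> G \<subseteq> H \<or> H \<subseteq> G"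
    using chain unfolding subset_chain_def by blast+
  have sub: "\<And>G. G \<in> C \<Longrightarrow> subspace G"
    using dom by (simp add: dominated_linear_graph_def)
  have "subspace (\<Union>C)"
  proof (rule subspaceI)
    obtain G where "G \<in> C" using \<open>C \<noteq> {}\<close> by blast
    thus "0 \<in> \<Union>C" using subspace_0[OF sub] by blast
    show "u + v \<in> \<Union>C" if uv: "u \<in> \<Union>C" "v \<in> \<Union>C" for u v
    proof -
      obtain G H where "u \<in> G" "v \<in> H" "G \<in> C" "H \<in> C" using uv by blast
      thus ?thesis using cmp[of G H] subspace_add[OF sub] by blast
    qed
    show "c *\<^sub>R u \<in> \<Union>C" if "u \<in> \<Union>C" for c u
      using that subspace_mul[OF sub] by blast
  qed
  thus ?thesis using dom by (auto simp: dominated_linear_graph_def)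
qed

theorem hahn_banach_convex_majorant:
  fixes p :: "'v::real_vector \<Rightarrow> real"
  assumes p: "convex_on UNIV p" and "0 \<le> p 0"
  shows "\<exists>f. linear f \<and> (\<forall>x. f x \<le> p x)"
proof -
  have "dominated_linear_graph p {0}"
    using \<open>0 \<le> p 0\<close> by (simp add: dominated_linear_graph_def case_prod_unfold)
  hence "\<exists>G\<in>{G. dominated_linear_graph p G}. \<forall>H\<in>{G. dominated_linear_graph p G}. G \<subseteq> H \<longrightarrow> H = G"
    by (intro subset_Zorn_nonempty) (auto intro: dominated_linear_graph_Union_chain)
  then obtain G where G: "dominated_linear_graph p G"
    and max: "\<And>H. dominated_linear_graph p H \<Longrightarrow> G \<subseteq> H \<Longrightarrow> H = G"
    by blast
  have total: "\<exists>a. (x, a) \<in> G" for x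
  proof -
    obtain c where H: "dominated_linear_graph p (span (insert (x, c) G))"
      using dominated_linear_graph_extend[OF p G] by blast
    have "G \<subseteq> span (insert (x, c) G)"
      by (meson span_superset subset_insertI order_trans)
    hence "span (insert (x, c) G) = G" by (rule max[OF H])
    thus ?thesis using span_base[of "(x, c)" "insert (x, c) G"] by auto
  qed
  have single: "\<And>x a b. (x, a) \<in> G \<Longrightarrow> (x, b) \<in> G \<Longrightarrow> a = b"
    using dominated_linear_graph_single_valued[OF G] by blast
  define f where "f x = (THE a. (x, a) \<in> G)" for x
  have f_eq: "f x = a" if "(x, a) \<in> G" for x a
    unfolding f_def using that single by (intro the_equality) auto
  have fG: "(x, f x) \<in> G" for x
    using total[of x] f_eq by auto
  have sub: "subspace G" and le: "\<And>x a. (x, a) \<in> G \<Longrightarrow> a \<le> p x"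
    using G by (auto simp: dominated_linear_graph_def)
  have "linear f"
  proof (rule linearI)
    show "f (x + y) = f x + f y" for x y
      using subspace_add[OF sub fG fG] f_eq by simp
    show "f (r *\<^sub>R x) = r *\<^sub>R f x" for r x
      using subspace_mul[OF sub fG] f_eq by simp
  qed
  thus ?thesis using le fG by blast
qed

definition seminorm :: "('v::real_vector \<Rightarrow> real) \<Rightarrow> bool" where
  "seminorm q \<longleftrightarrow> (\<forall>x y. q (x + y) \<le> q x + q y) \<and> (\<forall>c x. q (c *\<^sub>R x) = \<bar>c\<bar> * q x)"

lemma seminorm_triangle: "seminorm q \<Longrightarrow> q (x + y) \<le> q x + q y"
  and seminorm_scaleR: "seminorm q \<Longrightarrow> q (c *\<^sub>R x) = \<bar>c\<bar> * q x"
  by (simp_all add: seminorm_def)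

lemma seminorm_nonneg:
  assumes "seminorm q" shows "0 \<le> q x"
  using seminorm_triangle[OF assms, of x "-x"] seminorm_scaleR[OF assms, of "-1" x]
    seminorm_scaleR[OF assms, of 0 x] by simp

lemma seminorm_norm: "seminorm norm"
  by (simp add: seminorm_def norm_triangle_ineq)

lemma linear_le_seminorm_if_le_plus_const:
  assumes q: "seminorm q" and f: "linear f" and le: "\<And>x. f x \<le> q x + b"
  shows "f x \<le> q x"
proof (rule ccontr)
  assume "\<not> f x \<le> q x"
  define t where "t = (\<bar>b\<bar> + 1) / (f x - q x)"
  have "t > 0" using \<open>\<not> f x \<le> q x\<close> by (simp add: t_def)
  have "t * f x \<le> t * q x + b"
    using le[of "t *\<^sub>R x"] linear_scale[OF f] seminorm_scaleR[OF q] \<open>t > 0\<close> by simp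
  moreover have "t * (f x - q x) = \<bar>b\<bar> + 1" using \<open>\<not> f x \<le> q x\<close> by (simp add: t_def)
  ultimately show False by (simp add: algebra_simps)
qed

definition seminorm_setdist :: "('v::real_vector \<Rightarrow> real) \<Rightarrow> 'v set \<Rightarrow> 'v \<Rightarrow> real" where
  "seminorm_setdist q K h = (INF g\<in>K. q (h - g))"

lemma seminorm_setdist_le:
  assumes "seminorm q" and "g \<in> K"
  shows "seminorm_setdist q K h \<le> q (h - g)"
  unfolding seminorm_setdist_def using seminorm_nonneg[OF assms(1)] assms(2)
  by (intro cINF_lower bdd_belowI[of _ 0]) auto

lemma seminorm_setdist_greatest:
  assumes "K \<noteq> {}" and "\<And>g. g \<in> K \<Longrightarrow> b \<le> q (h - g)"
  shows "b \<le> seminorm_setdist q K h"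
  unfolding seminorm_setdist_def by (rule cINF_greatest[OF assms])

lemma seminorm_setdist_add_le:
  assumes q: "seminorm q" and "K \<noteq> {}"
  shows "seminorm_setdist q K (h + w) \<le> q h + seminorm_setdist q K w"
proof -
  have "seminorm_setdist q K (h + w) - q h \<le> seminorm_setdist q K w"
  proof (rule seminorm_setdist_greatest[OF \<open>K \<noteq> {}\<close>])
    fix g assume "g \<in> K"
    have "seminorm_setdist q K (h + w) \<le> q (h + (w - g))"
      using seminorm_setdist_le[OF q \<open>g \<in> K\<close>] by (simp add: algebra_simps)
    also have "\<dots> \<le> q h + q (w - g)" by (rule seminorm_triangle[OF q])
    finally show "seminorm_setdist q K (h + w) - q h \<le> q (w - g)" by simp
  qed
  thus ?thesis by simp
qed

lemma convex_on_seminorm_setdist: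
  assumes q: "seminorm q" and K: "convex K" "K \<noteq> {}"
  shows "convex_on UNIV (seminorm_setdist q K)"
proof (rule convex_onI)
  let ?D = "seminorm_setdist q K"
  have approx: "\<exists>g\<in>K. q (h - g) < ?D h + \<epsilon>" if "\<epsilon> > 0" for h \<epsilon>
    using cInf_lessD[of "(\<lambda>g. q (h - g)) ` K" "?D h + \<epsilon>"] K(2) that
    by (auto simp: seminorm_setdist_def)
  fix t :: real and x y assume t: "0 < t" "t < 1"
  show "?D ((1 - t) *\<^sub>R x + t *\<^sub>R y) \<le> (1 - t) * ?D x + t * ?D y"
  proof (rule field_le_epsilon)
    fix \<epsilon> :: real assume "\<epsilon> > 0"
    obtain g1 g2 where g: "g1 \<in> K" "g2 \<in> K"
      and g1: "q (x - g1) < ?D x + \<epsilon>" and g2: "q (y - g2) < ?D y + \<epsilon>"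
      using approx[OF \<open>\<epsilon> > 0\<close>] by meson
    have "(1 - t) *\<^sub>R g1 + t *\<^sub>R g2 \<in> K"
      using K(1) g t by (intro convexD) auto
    hence "?D ((1 - t) *\<^sub>R x + t *\<^sub>R y) \<le> q (((1 - t) *\<^sub>R x + t *\<^sub>R y) - ((1 - t) *\<^sub>R g1 + t *\<^sub>R g2))"
      by (rule seminorm_setdist_le[OF q])
    also have "\<dots> = q ((1 - t) *\<^sub>R (x - g1) + t *\<^sub>R (y - g2))"
      by (simp add: algebra_simps)
    also have "\<dots> \<le> (1 - t) * q (x - g1) + t * q (y - g2)"
      using seminorm_triangle[OF q] seminorm_scaleR[OF q] t by (smt (verit))
    also have "\<dots> \<le> (1 - t) * (?D x + \<epsilon>) + t * (?D y + \<epsilon>)"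
      using g1 g2 t by (intro add_mono mult_left_mono) auto
    finally show "?D ((1 - t) *\<^sub>R x + t *\<^sub>R y) \<le> (1 - t) * ?D x + t * ?D y + \<epsilon>"
      by (simp add: algebra_simps)
  qed
qed simp

text \<open>Hahn-Banach applied to the convex majorant h \<mapsto> d(h + w, K) - e, where d is the
  q-distance to K.\<close>
lemma seminorm_separation:
  assumes q: "seminorm q" and K: "convex K" "K \<noteq> {}"
    and far: "\<And>g. g \<in> K \<Longrightarrow> e \<le> q (w - g)"
  shows "\<exists>f. linear f \<and> (\<forall>x. f x \<le> q x) \<and> (\<forall>g\<in>K. f g + e \<le> f w)"
proof -
  define D where "D = seminorm_setdist q K"
  have D: "convex_on UNIV D"
    unfolding D_def using q K by (rule convex_on_seminorm_setdist)
  define p where "p h = D (h + w) - e" for h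
  have "convex_on UNIV p"
  proof (rule convex_onI)
    fix t :: real and x y assume "0 < t" "t < 1"
    have "(1 - t) *\<^sub>R x + t *\<^sub>R y + w = (1 - t) *\<^sub>R (x + w) + t *\<^sub>R (y + w)"
      by (simp add: algebra_simps)
    thus "p ((1 - t) *\<^sub>R x + t *\<^sub>R y) \<le> (1 - t) * p x + t * p y"
      using convex_onD[OF D, of t "x + w" "y + w"] \<open>0 < t\<close> \<open>t < 1\<close>
      by (simp add: p_def algebra_simps)
  qed simp
  moreover have "e \<le> D w"
    unfolding D_def using K(2) far by (rule seminorm_setdist_greatest)
  hence "0 \<le> p 0" by (simp add: p_def)
  ultimately obtain f where f: "linear f" and f_le: "\<And>x. f x \<le> p x"
    using hahn_banach_convex_majorant by blast
  have "f h \<le> q h + (D w - e)" for h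
    using f_le[of h] seminorm_setdist_add_le[OF q K(2), of h w] by (simp add: p_def D_def)
  hence "\<forall>x. f x \<le> q x" using linear_le_seminorm_if_le_plus_const[OF q f] by blast
  moreover have "f g + e \<le> f w" if "g \<in> K" for g
  proof -
    have "f (g - w) \<le> D g - e" using f_le[of "g - w"] by (simp add: p_def)
    moreover have "D g \<le> 0"
      using seminorm_setdist_le[OF q that, of g] seminorm_scaleR[OF q, of 0 0] by (simp add: D_def)
    ultimately show ?thesis using linear_diff[OF f] by simp
  qed
  ultimately show ?thesis using f by blast
qed

lemma linear_combination_if_kernels_subset:
  fixes \<phi> :: "'i \<Rightarrow> 'v::real_vector \<Rightarrow> real"
  assumes "finite F" and \<phi>: "\<And>i. i \<in> F \<Longrightarrow> linear (\<phi> i)" and "linear L"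
    and ker: "\<And>v. (\<forall>i\<in>F. \<phi> i v = 0) \<Longrightarrow> L v = 0"
  shows "\<exists>a. \<forall>v. L v = (\<Sum>i\<in>F. a i * \<phi> i v)"
  using assms
proof (induction F arbitrary: L rule: finite_induct)
  case empty
  thus ?case by simp
next
  case (insert j F)
  have \<phi>F: "\<And>i. i \<in> F \<Longrightarrow> linear (\<phi> i)" and \<phi>j: "linear (\<phi> j)"
    using insert.prems(1) by auto
  obtain c where c: "\<And>v. \<forall>i\<in>F. \<phi> i v = 0 \<Longrightarrow> L v - c * \<phi> j v = 0"
  proof (cases "\<exists>v. (\<forall>i\<in>F. \<phi> i v = 0) \<and> \<phi> j v \<noteq> 0")
    case True
    then obtain v0 where v0: "\<forall>i\<in>F. \<phi> i v0 = 0" "\<phi> j v0 \<noteq> 0" by blast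
    define v1 where "v1 = (1 / \<phi> j v0) *\<^sub>R v0"
    have v1: "\<forall>i\<in>F. \<phi> i v1 = 0" "\<phi> j v1 = 1"
      using v0 \<phi>F \<phi>j by (auto simp: v1_def linear_scale)
    have "L v - L v1 * \<phi> j v = 0" if "\<forall>i\<in>F. \<phi> i v = 0" for v
    proof -
      have "\<forall>i\<in>insert j F. \<phi> i (v - \<phi> j v *\<^sub>R v1) = 0"
        using that v1 \<phi>F \<phi>j by (simp add: linear_diff linear_scale)
      hence "L (v - \<phi> j v *\<^sub>R v1) = 0" by (rule insert.prems(3))
      thus ?thesis using insert.prems(2) by (simp add: linear_diff linear_scale mult.commute)
    qed
    thus ?thesis by (rule that)
  next
    case False
    thus ?thesis using insert.prems(3) by (intro that[of 0]) auto
  qed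
  have "linear (\<lambda>v. L v - c * \<phi> j v)"
    using insert.prems(2) \<phi>j by (intro linearI) (simp_all add: linear_add linear_scale algebra_simps)
  then obtain a where a: "\<forall>v. L v - c * \<phi> j v = (\<Sum>i\<in>F. a i * \<phi> i v)"
    using insert.IH[OF \<phi>F] c by blast
  have "(\<Sum>i\<in>F. (a(j := c)) i * \<phi> i v) = (\<Sum>i\<in>F. a i * \<phi> i v)" for v
    using insert.hyps(2) by (intro sum.cong) auto
  hence "L v = (\<Sum>i\<in>insert j F. (a(j := c)) i * \<phi> i v)" for v
    using insert.hyps a[rule_format, of v] by simp
  thus ?case by blast
qed

lemma separation_from_closure:
  fixes K :: "'a::real_normed_vector set"
  assumes "convex K" and w: "w \<notin> closure K"
  shows "\<exists>f :: 'a \<Rightarrow>\<^sub>L real. \<forall>g\<in>closure K. f g < f w"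
proof (cases "K = {}")
  case False
  obtain e where e: "e > 0" and "\<forall>g\<in>K. \<not> dist g w < e"
    using w unfolding closure_approachable by blast
  hence far: "\<And>g. g \<in> K \<Longrightarrow> e \<le> norm (w - g)"
    by (simp add: dist_norm norm_minus_commute not_less)
  obtain L where L: "linear L" and L_le: "\<forall>x. L x \<le> norm x" and sep: "\<forall>g\<in>K. L g + e \<le> L w"
    using seminorm_separation[OF seminorm_norm \<open>convex K\<close> False far] by blast
  have "bounded_linear L"
  proof (rule bounded_linear_intro[where K = 1])
    show "L (x + y) = L x + L y" "L (r *\<^sub>R x) = r *\<^sub>R L x" for x y r
      using L by (simp_all add: linear_add linear_scale)
    show "norm (L x) \<le> norm x * 1" for x
      using L_le[rule_format, of x] L_le[rule_format, of "-x"] linear_neg[OF L, of x] by simp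
  qed
  hence f: "blinfun_apply (Blinfun L) = L" by (rule bounded_linear_Blinfun_apply)
  have "L g < L w" if g: "g \<in> closure K" for g
  proof -
    obtain k where "k \<in> K" "dist k g < e" using g e unfolding closure_approachable by blast
    hence "L (g - k) < e" using L_le[rule_format, of "g - k"] by (simp add: dist_norm norm_minus_commute)
    moreover have "L k + e \<le> L w" using sep \<open>k \<in> K\<close> by blast
    ultimately show ?thesis using linear_diff[OF L, of g k] by linarith
  qed
  thus ?thesis using f by metis
qed simp

lemma seminorm_sum_abs_blinfun_apply:
  "seminorm (\<lambda>h :: 'a::real_normed_vector \<Rightarrow>\<^sub>L real. \<Sum>x\<in>F. \<bar>h x\<bar>)"
  unfolding seminorm_def
proof (intro conjI allI)
  show "(\<Sum>x\<in>F. \<bar>(h1 + h2) x\<bar>) \<le> (\<Sum>x\<in>F. \<bar>h1 x\<bar>) + (\<Sum>x\<in>F. \<bar>h2 x\<bar>)" for h1 h2 :: "'a \<Rightarrow>\<^sub>L real"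
    unfolding sum.distrib[symmetric]
    by (intro sum_mono) (simp add: blinfun.bilinear_simps abs_triangle_ineq)
  show "(\<Sum>x\<in>F. \<bar>(c *\<^sub>R h) x\<bar>) = \<bar>c\<bar> * (\<Sum>x\<in>F. \<bar>h x\<bar>)" for c and h :: "'a \<Rightarrow>\<^sub>L real"
    by (simp add: abs_mult sum_distrib_left blinfun.scaleR_left)
qed

text \<open>A linear functional on X* dominated by a weak-* seminorm vanishes on the common kernel
  of finitely many evaluations, so it is itself an evaluation.\<close>
lemma linear_dominated_by_evaluations:
  fixes L :: "('a::real_normed_vector \<Rightarrow>\<^sub>L real) \<Rightarrow> real"
  assumes F: "finite F" and L: "linear L" and L_le: "\<And>h. L h \<le> (\<Sum>x\<in>F. \<bar>h x\<bar>)"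
  shows "\<exists>z. \<forall>h. L h = h z"
proof -
  have "L h = 0" if "\<forall>x\<in>F. h x = 0" for h :: "'a \<Rightarrow>\<^sub>L real"
    using L_le[of h] L_le[of "-h"] linear_neg[OF L, of h] that
    by (simp add: blinfun.bilinear_simps)
  moreover have "linear (\<lambda>h :: 'a \<Rightarrow>\<^sub>L real. h x)" for x
    by (rule bounded_linear.linear[OF blinfun.bounded_linear_left])
  ultimately obtain a where a: "\<forall>h. L h = (\<Sum>x\<in>F. a x * h x)"
    using linear_combination_if_kernels_subset[OF F _ L, of "\<lambda>x h. h x"] by blast
  have "L h = h (\<Sum>x\<in>F. a x *\<^sub>R x)" for h :: "'a \<Rightarrow>\<^sub>L real"
    unfolding a[rule_format] by (simp add: blinfun.sum_right blinfun.scaleR_right)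
  thus ?thesis by blast
qed

lemma separation_from_wstar_closure:
  fixes K :: "('a::real_normed_vector \<Rightarrow>\<^sub>L real) set"
  assumes "convex K" and w: "w \<notin> wstar_closure K"
  shows "\<exists>z. \<forall>g\<in>wstar_closure K. g z < w z"
proof (cases "K = {}")
  case True
  have "wstar_closure K = {}"
    unfolding wstar_closure_def True using zero_less_one by blast
  thus ?thesis by simp
next
  case False
  obtain F e where F: "finite F" and e: "e > 0"
    and near: "\<forall>g\<in>K. \<exists>x\<in>F. e \<le> \<bar>w x - g x\<bar>"
    using w unfolding wstar_closure_def by (auto simp: not_less)
  have far: "e \<le> (\<Sum>x\<in>F. \<bar>(w - g) x\<bar>)" if g: "g \<in> K" for g
  proof -
    obtain x where "x \<in> F" "e \<le> \<bar>w x - g x\<bar>" using near g by blast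
    moreover have "\<bar>(w - g) x\<bar> \<le> (\<Sum>x\<in>F. \<bar>(w - g) x\<bar>)"
      using F \<open>x \<in> F\<close> by (intro member_le_sum) auto
    ultimately show ?thesis by (simp add: blinfun.bilinear_simps)
  qed
  obtain L :: "('a \<Rightarrow>\<^sub>L real) \<Rightarrow> real"
    where L: "linear L" and L_le: "\<forall>h. L h \<le> (\<Sum>x\<in>F. \<bar>blinfun_apply h x\<bar>)"
    and sep: "\<forall>g\<in>K. L g + e \<le> L w"
    using seminorm_separation[OF seminorm_sum_abs_blinfun_apply \<open>convex K\<close> False far] by blast
  obtain z where Lz: "\<And>h. L h = h z"
    using linear_dominated_by_evaluations[OF F L] L_le by blast
  have "g z < w z" if g: "g \<in> wstar_closure K" for g
  proof -
    have "\<exists>k\<in>K. \<forall>x\<in>{z}. \<bar>g x - k x\<bar> < e"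
      using g e unfolding wstar_closure_def by blast
    then obtain k where "k \<in> K" "\<bar>g z - k z\<bar> < e" by blast
    moreover have "L k + e \<le> L w" using sep \<open>k \<in> K\<close> by blast
    ultimately show ?thesis unfolding Lz by linarith
  qed
  thus ?thesis by blast
qed

lemma bdd_above_if_SUP_ereal_less_infinity:
  assumes "(SUP x\<in>A. ereal (f x)) < \<infinity>"
  shows "bdd_above (f ` A)"
proof -
  obtain n :: nat where n: "(SUP x\<in>A. ereal (f x)) < ereal (real n)"
    using assms by (auto simp: less_PInf_Ex_of_nat)
  have "ereal (f x) < ereal (real n)" if "x \<in> A" for x
    using SUP_upper[OF that, of "\<lambda>x. ereal (f x)"] n by (rule order.strict_trans1)
  thus ?thesis by (intro bdd_aboveI[of _ "real n"]) fastforce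
qed

lemma canon_emb_apply: "blinfun_apply (canon_emb x) f = blinfun_apply f x"
  unfolding canon_emb_def by (subst bounded_linear_Blinfun_apply) (auto intro: blinfun.bounded_linear_left)

lemma subset_wstar_closure: "K \<subseteq> wstar_closure K"
  unfolding wstar_closure_def by force

lemma rec_cone_if_separable:
  fixes C :: "'v::real_vector set" and \<Phi> :: "('v \<Rightarrow> real) set"
  assumes sep: "\<And>x w. x \<in> C \<Longrightarrow> w \<notin> C \<Longrightarrow> \<exists>f\<in>\<Phi>. \<forall>g\<in>C. f g < f w"
    and lin: "\<And>f. f \<in> \<Phi> \<Longrightarrow> linear f"
    and nonpos: "\<And>f. f \<in> \<Phi> \<Longrightarrow> bdd_above (f ` C) \<Longrightarrow> f u \<le> 0"
  shows "u \<in> rec_cone C"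
  unfolding rec_cone_def
proof (intro CollectI ballI allI impI, rule ccontr)
  fix x and l :: real
  assume x: "x \<in> C" and "0 \<le> l" and w: "x + l *\<^sub>R u \<notin> C"
  then obtain f where "f \<in> \<Phi>" and f: "\<forall>g\<in>C. f g < f (x + l *\<^sub>R u)"
    using sep by blast
  have "bdd_above (f ` C)"
    using f by (intro bdd_aboveI[of _ "f (x + l *\<^sub>R u)"]) (auto intro: less_imp_le)
  hence "f u \<le> 0" using nonpos \<open>f \<in> \<Phi>\<close> by blast
  moreover have "f x < f x + l * f u"
    using f[rule_format, OF x] lin[OF \<open>f \<in> \<Phi>\<close>] by (simp add: linear_add linear_scale)
  ultimately show False using mult_nonneg_nonpos[OF \<open>0 \<le> l\<close>] by fastforce
qed

lemma maximal_monotone_nonempty: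
  assumes "maximal_monotone T" shows "T \<noteq> {}"
proof
  assume "T = {}"
  have "monotone_op {(0, 0)}" by (simp add: monotone_op_def)
  thus False using assms \<open>T = {}\<close> unfolding maximal_monotone_def by blast
qed

lemma maximal_monotone_memI:
  assumes T: "maximal_monotone T"
    and rel: "\<And>x xs. (x, xs) \<in> T \<Longrightarrow> 0 \<le> blinfun_apply (xs - ps) (x - p)"
  shows "(p, ps) \<in> T"
proof -
  have mono: "monotone_op T" using T by (simp add: maximal_monotone_def)
  have rel': "0 \<le> blinfun_apply (ps - xs) (p - x)" if "(x, xs) \<in> T" for x xs
    using rel[OF that] by (simp add: blinfun.bilinear_simps algebra_simps)
  have "monotone_op (insert (p, ps) T)"
    using mono rel rel' unfolding monotone_op_def by auto
  hence "insert (p, ps) T = T" using T unfolding maximal_monotone_def by blast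
  thus ?thesis by blast
qed

lemma maximal_monotone_pairing_nonpos:
  fixes T :: "('a::real_normed_vector \<times> ('a \<Rightarrow>\<^sub>L real)) set" and u :: "'a \<Rightarrow>\<^sub>L real"
  assumes T: "maximal_monotone T"
    and dom_bdd: "bdd_above ((\<lambda>x. blinfun_apply u x) ` dom_op T)"
    and ran_bdd: "bdd_above ((\<lambda>xs. blinfun_apply xs z) ` ran_op T)"
  shows "blinfun_apply u z \<le> 0"
proof (rule ccontr)
  assume "\<not> blinfun_apply u z \<le> 0"
  hence c: "blinfun_apply u z > 0" by simp
  obtain M :: real where M: "\<And>x xs. (x, xs) \<in> T \<Longrightarrow> blinfun_apply u x \<le> M"
    using dom_bdd by (force simp: bdd_above_def dom_op_def)
  obtain \<sigma> :: real where \<sigma>: "\<And>x xs. (x, xs) \<in> T \<Longrightarrow> blinfun_apply xs z \<le> \<sigma>"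
    using ran_bdd by (force simp: bdd_above_def ran_op_def)
  obtain y ys where yT: "(y, ys) \<in> T" using maximal_monotone_nonempty[OF T] by auto
  define A where "A = \<sigma> - blinfun_apply ys z"
  define B where "B = M - blinfun_apply u y"
  define s where "s = (A + B) / blinfun_apply u z + 1"
  have "A \<ge> 0" "B \<ge> 0" using M[OF yT] \<sigma>[OF yT] by (simp_all add: A_def B_def)
  hence s: "s > 0" "s * blinfun_apply u z = A + B + blinfun_apply u z"
    using c by (simp_all add: s_def field_simps add_pos_nonneg)
  have "(y + s *\<^sub>R z, ys + s *\<^sub>R u) \<in> T"
  proof (rule maximal_monotone_memI[OF T])
    fix x xs assume xT: "(x, xs) \<in> T"
    have "0 \<le> blinfun_apply (xs - ys) (x - y)"
      using T xT yT by (auto simp: maximal_monotone_def monotone_op_def)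
    moreover have "s * blinfun_apply xs z \<le> s * \<sigma>" "s * blinfun_apply u x \<le> s * M"
      using \<sigma>[OF xT] M[OF xT] s(1) by simp_all
    moreover have "blinfun_apply (xs - (ys + s *\<^sub>R u)) (x - (y + s *\<^sub>R z)) =
        blinfun_apply (xs - ys) (x - y) - s * blinfun_apply xs z + s * blinfun_apply ys z
        - s * blinfun_apply u x + s * blinfun_apply u y + s * (s * blinfun_apply u z)"
      by (simp add: blinfun.bilinear_simps algebra_simps)
    moreover have "s * (s * blinfun_apply u z) =
        s * \<sigma> - s * blinfun_apply ys z + s * M - s * blinfun_apply u y + s * blinfun_apply u z"
    proof -
      have "s * (s * blinfun_apply u z) = s * (A + B + blinfun_apply u z)" using s(2) by simp
      thus ?thesis by (simp add: A_def B_def algebra_simps)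
    qed
    ultimately show "0 \<le> blinfun_apply (xs - (ys + s *\<^sub>R u)) (x - (y + s *\<^sub>R z))"
      using s c by (smt (verit) mult_pos_pos)
  qed
  hence "blinfun_apply u (y + s *\<^sub>R z) \<le> M" using M by blast
  thus False using s c \<open>A \<ge> 0\<close> by (simp add: B_def blinfun.bilinear_simps)
qed

lemma rec_cone_wstar_closure_convex_hull_ran:
  fixes T :: "('a::real_normed_vector \<times> ('a \<Rightarrow>\<^sub>L real)) set" and u :: "'a \<Rightarrow>\<^sub>L real"
  assumes T: "maximal_monotone T" and dom_bdd: "bdd_above (blinfun_apply u ` dom_op T)"
  shows "u \<in> rec_cone (wstar_closure (convex hull (ran_op T)))"
proof -
  let ?C = "wstar_closure (convex hull (ran_op T))"
  let ?\<Phi> = "range (\<lambda>z (g :: 'a \<Rightarrow>\<^sub>L real). g z)"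
  have ran_sub: "ran_op T \<subseteq> ?C"
    by (rule order_trans[OF hull_subset subset_wstar_closure])
  show ?thesis
  proof (rule rec_cone_if_separable[where \<Phi> = ?\<Phi>])
    fix w assume "w \<notin> ?C"
    then obtain z where "\<forall>g\<in>?C. g z < w z"
      using separation_from_wstar_closure[OF convex_convex_hull] by blast
    thus "\<exists>f\<in>?\<Phi>. \<forall>g\<in>?C. f g < f w"
      by (intro bexI[of _ "\<lambda>g. blinfun_apply g z"]) auto
  next
    show "linear f" if "f \<in> ?\<Phi>" for f
      using that bounded_linear.linear[OF blinfun.bounded_linear_left] by blast
  next
    fix f assume "f \<in> ?\<Phi>" and bdd: "bdd_above (f ` ?C)"
    then obtain z where f: "f = (\<lambda>g. blinfun_apply g z)" by blast
    have "bdd_above (f ` ran_op T)"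
      using bdd_above_mono[OF bdd image_mono[OF ran_sub]] .
    thus "f u \<le> 0" unfolding f by (rule maximal_monotone_pairing_nonpos[OF T dom_bdd])
  qed
qed

lemma rec_cone_closure_convex_hull_dom:
  fixes T :: "('a::real_normed_vector \<times> ('a \<Rightarrow>\<^sub>L real)) set"
  assumes T: "maximal_monotone T" and ran_bdd: "bdd_above ((\<lambda>xs. blinfun_apply xs u) ` ran_op T)"
  shows "u \<in> rec_cone (closure (convex hull (dom_op T)))"
proof -
  let ?C = "closure (convex hull (dom_op T))"
  let ?\<Phi> = "range (blinfun_apply :: ('a \<Rightarrow>\<^sub>L real) \<Rightarrow> 'a \<Rightarrow> real)"
  have dom_sub: "dom_op T \<subseteq> ?C"
    by (rule order_trans[OF hull_subset closure_subset])
  show ?thesis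
  proof (rule rec_cone_if_separable[where \<Phi> = ?\<Phi>])
    fix w assume "w \<notin> ?C"
    then obtain z :: "'a \<Rightarrow>\<^sub>L real" where "\<forall>g\<in>?C. z g < z w"
      using separation_from_closure[OF convex_convex_hull] by blast
    thus "\<exists>f\<in>?\<Phi>. \<forall>g\<in>?C. f g < f w"
      by (intro bexI[of _ "blinfun_apply z"]) auto
  next
    show "linear f" if "f \<in> ?\<Phi>" for f
      using that bounded_linear.linear[OF blinfun.bounded_linear_right] by blast
  next
    fix f assume "f \<in> ?\<Phi>" and bdd: "bdd_above (f ` ?C)"
    then obtain z where f: "f = blinfun_apply z" by blast
    have "bdd_above (f ` dom_op T)"
      using bdd_above_mono[OF bdd image_mono[OF dom_sub]] .
    thus "f u \<le> 0" unfolding f by (rule maximal_monotone_pairing_nonpos[OF T _ ran_bdd])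
  qed
qed

theorem lemma4p2:
  fixes T :: "('a::banach \<times> ('a \<Rightarrow>\<^sub>L real)) set"
  assumes "maximal_monotone T"
  shows "eff_dom (supp_dom (dom_op T)) \<subseteq> rec_cone (wstar_closure (convex hull (ran_op T))) \<and>
         {u::'a. canon_emb u \<in> eff_dom (supp_ran (ran_op T))}
           \<subseteq> rec_cone (closure (convex hull (dom_op T)))"
proof safe
  fix u assume "u \<in> eff_dom (supp_dom (dom_op T))"
  hence "bdd_above (blinfun_apply u ` dom_op T)"
    by (intro bdd_above_if_SUP_ereal_less_infinity) (simp add: eff_dom_def supp_dom_def)
  thus "u \<in> rec_cone (wstar_closure (convex hull (ran_op T)))"
    by (rule rec_cone_wstar_closure_convex_hull_ran[OF assms])
next
  fix u :: 'a assume "canon_emb u \<in> eff_dom (supp_ran (ran_op T))"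
  hence "bdd_above ((\<lambda>xs. blinfun_apply xs u) ` ran_op T)"
    by (intro bdd_above_if_SUP_ereal_less_infinity) (simp add: eff_dom_def supp_ran_def canon_emb_apply)
  thus "u \<in> rec_cone (closure (convex hull (dom_op T)))"
    by (rule rec_cone_closure_convex_hull_dom[OF assms])
qed

end
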